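(* Assume (C1) and (C2). For any $u\in\mathcal{D}$ with $u\neq0$, there exists a unique constant $t_0>0$ such that $t_0u\in\mathcal{N}$.
   Context: Fix real numbers $p,q,r$ with $1<p<q$, $\frac p2$ a positive integer, and $r\ge1$, and functions $a,b,c:\mathbb{Z}\to(0,+\infty)$. Conditions: - (C1) There is $b_0>0$ with $b(n)\ge b_0$ for all $n$ and $b(n)\to+\infty$ as $|n|\to\infty$. - (C2) There is $c_0>0$ with $c(n)\le c_0$ for all $n$ and $\sum_n c(n)<+\infty$. Notation and spaces: - $\Delta u(n)=u(n+1)-u(n)$. - $E$ is the set of real sequences $u$ with $\|u\|:=\big(\sum_n[a(n)|\Delta u(n)|^p+b(n)|u(n)|^p]\big)^{1/p}<\infty$. - $\mathcal{D}=\{u\in E:\sum_n c(n)|u(n)|^q\ln|u(n)|^r<+\infty\}$, where terms with $u(n)=0$ are read as $0$. For $u,v\in\mathcal{D}$: $$\langle I'(u),v\rangle=\sum_n[a(n)|\Delta u(n)|^{p-2}\Delta u(n)\Delta v(n)+b(n)|u(n)|^{p-2}u(n)v(n)]-\sum_n c(n)|u(n)|^{q-2}u(n)v(n)\ln|u(n)|^r.$$ $\mathcal{N}=\{u\in\mathcal{D}:u\ne0,\ \langle I'(u),u\rangle=0\}$. *)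

theory Defs
  imports "HOL-Analysis.Analysis"
begin

definition fdiff :: "(int \<Rightarrow> real) \<Rightarrow> int \<Rightarrow> real" where
  "fdiff u n = u (n + 1) - u n"

definition logterm :: "real \<Rightarrow> real \<Rightarrow> real" where
  "logterm r x = (if x = 0 then 0 else ln (\<bar>x\<bar> powr r))"

definition spaceE :: "(int \<Rightarrow> real) \<Rightarrow> (int \<Rightarrow> real) \<Rightarrow> real \<Rightarrow> (int \<Rightarrow> real) set" where
  "spaceE a b p = {u. (\<lambda>n. a n * \<bar>fdiff u n\<bar> powr p + b n * \<bar>u n\<bar> powr p) summable_on UNIV}"

definition spaceD :: "(int \<Rightarrow> real) \<Rightarrow> (int \<Rightarrow> real) \<Rightarrow> (int \<Rightarrow> real) \<Rightarrow> real \<Rightarrow> real \<Rightarrow> real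
    \<Rightarrow> (int \<Rightarrow> real) set" where
  "spaceD a b c p q r = {u \<in> spaceE a b p.
      (\<lambda>n. c n * \<bar>u n\<bar> powr q * logterm r (u n)) summable_on UNIV}"

definition Iprime :: "(int \<Rightarrow> real) \<Rightarrow> (int \<Rightarrow> real) \<Rightarrow> (int \<Rightarrow> real) \<Rightarrow> real \<Rightarrow> real \<Rightarrow> real
    \<Rightarrow> (int \<Rightarrow> real) \<Rightarrow> (int \<Rightarrow> real) \<Rightarrow> real" where
  "Iprime a b c p q r u v =
     (\<Sum>\<^sub>\<infinity>n. a n * \<bar>fdiff u n\<bar> powr (p - 2) * fdiff u n * fdiff v n
            + b n * \<bar>u n\<bar> powr (p - 2) * u n * v n)
   - (\<Sum>\<^sub>\<infinity>n. c n * \<bar>u n\<bar> powr (q - 2) * u n * v n * logterm r (u n))"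

definition nehari :: "(int \<Rightarrow> real) \<Rightarrow> (int \<Rightarrow> real) \<Rightarrow> (int \<Rightarrow> real) \<Rightarrow> real \<Rightarrow> real \<Rightarrow> real
    \<Rightarrow> (int \<Rightarrow> real) set" where
  "nehari a b c p q r = {u \<in> spaceD a b c p q r. u \<noteq> (\<lambda>_. 0) \<and> Iprime a b c p q r u u = 0}"

end

theory Submission
  imports Defs
begin

text \<open>Along the ray \<open>t \<mapsto> t u\<close> the Nehari functional factors as
  \<open>\<langle>I'(tu), tu\<rangle> = t^p \<parallel>u\<parallel>^p - t^q (r C ln t + L)\<close> with \<open>C = \<Sum> c |u|^q > 0\<close> and
  \<open>L = \<Sum> c |u|^q ln |u|^r\<close>. Hence \<open>t u \<in> \<N>\<close> iff \<open>\<parallel>u\<parallel>^p t^(p-q) = r C ln t + L\<close>; as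
  \<open>p < q\<close>, the left side decreases strictly from \<open>+\<infinity>\<close> to \<open>0\<close> while the right side increases
  strictly from \<open>-\<infinity>\<close> to \<open>+\<infinity>\<close>, so they cross exactly once. \<open>C\<close> is finite because the
  lower bound \<open>b \<ge> b0\<close> makes every \<open>u \<in> E\<close> bounded and \<open>c\<close> is summable.\<close>

lemma abs_powr_minus_two_mult_self:
  fixes x p :: real
  shows "\<bar>x\<bar> powr (p - 2) * x * x = \<bar>x\<bar> powr p"
proof (cases "x = 0")
  case False
  have "\<bar>x\<bar> powr (p - 2) * x * x = \<bar>x\<bar> powr (p - 2) * \<bar>x\<bar> powr 2"
    using False by (simp add: powr_numeral power2_eq_square abs_mult_self_eq)
  also have "\<dots> = \<bar>x\<bar> powr (p - 2 + 2)"
    by (rule powr_add[symmetric])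
  finally show ?thesis
    by simp
qed simp

lemma le_infsum_term:
  fixes f :: "'a \<Rightarrow> real"
  assumes "f summable_on A" and "\<And>x. x \<in> A \<Longrightarrow> f x \<ge> 0" and "x \<in> A"
  shows "f x \<le> infsum f A"
  using finite_sum_le_infsum[of f A "{x}"] assms by simp

lemma summable_on_weighted_powr:
  fixes c u :: "'a \<Rightarrow> real"
  assumes "c summable_on A" and "\<And>x. x \<in> A \<Longrightarrow> c x \<ge> 0"
    and "\<And>x. x \<in> A \<Longrightarrow> \<bar>u x\<bar> \<le> M" and "q \<ge> 0"
  shows "(\<lambda>x. c x * \<bar>u x\<bar> powr q) summable_on A"
proof (rule summable_on_comparison_test)
  show "(\<lambda>x. M powr q * c x) summable_on A"
    using assms(1) by (rule summable_on_cmult_right)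
  show "c x * \<bar>u x\<bar> powr q \<le> M powr q * c x" if "x \<in> A" for x
    using that assms(2-4) by (simp add: mult.commute mult_left_mono powr_mono2)
qed (use assms(2) in simp)

lemma ex1_pos_powr_eq_ln:
  fixes A k L e :: real
  assumes "A > 0" "k > 0" "e < 0"
  shows "\<exists>!t. t > 0 \<and> A * t powr e = k * ln t + L"
proof -
  define g where "g t = A * t powr e - k * ln t - L" for t
  have g_less: "g s < g t" if "0 < t" "t < s" for s t
  proof -
    have "s powr e < t powr e" and "ln t < ln s"
      using that assms by (simp_all add: powr_less_mono2_neg)
    then show ?thesis
      unfolding g_def using assms by (smt (verit) mult_strict_left_mono)
  qed
  text \<open>At \<open>t1 \<le> 1\<close> the power term alone exceeds \<open>|L|\<close>; at \<open>t2 \<ge> 1\<close> the logarithm alone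
    exceeds \<open>A + |L|\<close>.\<close>
  define B where "B = (\<bar>L\<bar> + 1) / A + 1"
  define t1 where "t1 = B powr (1 / e)"
  have "B > 1"
    unfolding B_def using assms by simp
  then have "0 < t1" "t1 \<le> 1" "t1 powr e = B"
    unfolding t1_def using assms
    by (simp_all add: powr_powr less_imp_le powr_less_one divide_less_0_1_iff)
  moreover have "A * B > \<bar>L\<bar>"
    unfolding B_def using assms by (simp add: field_simps add_pos_pos)
  moreover have "k * ln t1 \<le> 0"
    using \<open>0 < t1\<close> \<open>t1 \<le> 1\<close> assms by (simp add: mult_nonneg_nonpos)
  ultimately have t1: "0 < t1" "t1 \<le> 1" "g t1 > 0"
    unfolding g_def by auto
  define t2 where "t2 = exp ((A + \<bar>L\<bar> + 1) / k)"
  have "t2 \<ge> 1" "k * ln t2 = A + \<bar>L\<bar> + 1"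
    unfolding t2_def using assms by simp_all
  moreover have "A * t2 powr e \<le> A"
    using \<open>t2 \<ge> 1\<close> assms powr_mono[of e 0 t2] by simp
  ultimately have t2: "t2 \<ge> 1" "g t2 < 0"
    unfolding g_def by auto
  have "continuous_on {t1..t2} g"
    unfolding g_def using t1 by (intro continuous_intros) auto
  then obtain t where t: "t1 \<le> t" "t \<le> t2" "g t = 0"
    using IVT2'[of g t2 0 t1] t1 t2 by force
  show ?thesis
  proof (rule ex1I[of _ t])
    show "t > 0 \<and> A * t powr e = k * ln t + L"
      using t t1 unfolding g_def by simp
  next
    fix s
    assume "s > 0 \<and> A * s powr e = k * ln s + L"
    then show "s = t"
      using g_less[of s t] g_less[of t s] t t1 unfolding g_def by force
  qed
qed

text \<open>\<open>energy a b p u\<close> is \<open>\<parallel>u\<parallel>^p\<close>; the two weighted sums are the constants \<open>C\<close> and \<open>L\<close>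
  of the ray equation.\<close>

definition energy :: "(int \<Rightarrow> real) \<Rightarrow> (int \<Rightarrow> real) \<Rightarrow> real \<Rightarrow> (int \<Rightarrow> real) \<Rightarrow> real" where
  "energy a b p u = (\<Sum>\<^sub>\<infinity>n. a n * \<bar>fdiff u n\<bar> powr p + b n * \<bar>u n\<bar> powr p)"

definition weighted_powr_sum :: "(int \<Rightarrow> real) \<Rightarrow> real \<Rightarrow> (int \<Rightarrow> real) \<Rightarrow> real" where
  "weighted_powr_sum c q u = (\<Sum>\<^sub>\<infinity>n. c n * \<bar>u n\<bar> powr q)"

definition weighted_log_sum :: "(int \<Rightarrow> real) \<Rightarrow> real \<Rightarrow> real \<Rightarrow> (int \<Rightarrow> real) \<Rightarrow> real" where
  "weighted_log_sum c q r u = (\<Sum>\<^sub>\<infinity>n. c n * \<bar>u n\<bar> powr q * logterm r (u n))"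

lemma logterm_mult:
  assumes "t > 0" "x \<noteq> 0"
  shows "logterm r (t * x) = r * ln t + logterm r x"
  using assms by (simp add: logterm_def ln_powr abs_mult ln_mult algebra_simps)

lemma Iprime_self:
  "Iprime a b c p q r u u = energy a b p u - weighted_log_sum c q r u"
proof -
  have "y * \<bar>x\<bar> powr (s - 2) * x * x = y * \<bar>x\<bar> powr s" for x y s :: real
    using abs_powr_minus_two_mult_self[of x s] by (metis mult.assoc)
  then show ?thesis
    unfolding Iprime_def energy_def weighted_log_sum_def by (simp only:)
qed

lemma energy_term_scale:
  "a n * \<bar>fdiff (\<lambda>n. t * u n) n\<bar> powr p + b n * \<bar>t * u n\<bar> powr p
     = \<bar>t\<bar> powr p * (a n * \<bar>fdiff u n\<bar> powr p + b n * \<bar>u n\<bar> powr p)"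
proof -
  have "fdiff (\<lambda>n. t * u n) n = t * fdiff u n"
    by (simp add: fdiff_def algebra_simps)
  then show ?thesis
    by (simp add: abs_mult powr_mult algebra_simps)
qed

lemma spaceE_scale:
  assumes "u \<in> spaceE a b p"
  shows "(\<lambda>n. t * u n) \<in> spaceE a b p"
  using summable_on_cmult_right[of _ UNIV "\<bar>t\<bar> powr p"] assms
  by (simp add: spaceE_def energy_term_scale)

lemma energy_scale: "energy a b p (\<lambda>n. t * u n) = \<bar>t\<bar> powr p * energy a b p u"
  by (simp add: energy_def energy_term_scale infsum_cmult_right')

lemma log_term_scale:
  assumes "t > 0"
  shows "c n * \<bar>t * x\<bar> powr q * logterm r (t * x)
     = t powr q * (r * ln t * (c n * \<bar>x\<bar> powr q) + c n * \<bar>x\<bar> powr q * logterm r x)"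
  using assms logterm_mult[OF assms, of x r]
  by (cases "x = 0") (simp_all add: abs_mult powr_mult algebra_simps)

lemma
  assumes "t > 0" and "u \<in> spaceD a b c p q r"
    and "(\<lambda>n. c n * \<bar>u n\<bar> powr q) summable_on UNIV"
  shows spaceD_scale: "(\<lambda>n. t * u n) \<in> spaceD a b c p q r"
    and weighted_log_sum_scale: "weighted_log_sum c q r (\<lambda>n. t * u n)
      = t powr q * (r * ln t * weighted_powr_sum c q u + weighted_log_sum c q r u)"
proof -
  have log: "(\<lambda>n. c n * \<bar>u n\<bar> powr q * logterm r (u n)) summable_on UNIV"
    using assms(2) by (simp add: spaceD_def)
  have "(\<lambda>n. r * ln t * (c n * \<bar>u n\<bar> powr q) + c n * \<bar>u n\<bar> powr q * logterm r (u n))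
      summable_on UNIV"
    by (intro summable_on_add summable_on_cmult_right assms(3) log)
  then show "(\<lambda>n. t * u n) \<in> spaceD a b c p q r"
    using assms(2) spaceE_scale summable_on_cmult_right[of _ UNIV "t powr q"]
    by (simp add: spaceD_def log_term_scale[OF assms(1)])
  show "weighted_log_sum c q r (\<lambda>n. t * u n)
      = t powr q * (r * ln t * weighted_powr_sum c q u + weighted_log_sum c q r u)"
    using assms(3) log
    by (simp add: weighted_log_sum_def weighted_powr_sum_def log_term_scale[OF assms(1)]
        infsum_cmult_right' infsum_add summable_on_cmult_right)
qed

lemma scale_mem_nehari_iff:
  assumes "t > 0" and "u \<in> spaceD a b c p q r" and "u \<noteq> (\<lambda>_. 0)"
    and "(\<lambda>n. c n * \<bar>u n\<bar> powr q) summable_on UNIV"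
  shows "(\<lambda>n. t * u n) \<in> nehari a b c p q r \<longleftrightarrow>
    energy a b p u * t powr (p - q) = r * weighted_powr_sum c q u * ln t + weighted_log_sum c q r u"
proof -
  have nonzero: "(\<lambda>n. t * u n) \<noteq> (\<lambda>_. 0)"
    using assms(1,3) by (metis mult_eq_0_iff less_irrefl)
  have "t powr p = t powr q * t powr (p - q)"
    by (simp add: powr_add[symmetric])
  then have "Iprime a b c p q r (\<lambda>n. t * u n) (\<lambda>n. t * u n) = t powr q *
      (energy a b p u * t powr (p - q) - (r * weighted_powr_sum c q u * ln t + weighted_log_sum c q r u))"
    using assms(1) by (simp add: Iprime_self energy_scale weighted_log_sum_scale[OF assms(1,2,4)]
        algebra_simps)
  then show ?thesis
    using nonzero assms(1) spaceD_scale[OF assms(1,2,4)] by (simp add: nehari_def)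
qed

lemma energy_ge_term:
  assumes "u \<in> spaceE a b p" and "\<And>n. a n \<ge> 0" and "\<And>n. b n \<ge> 0"
  shows "a n * \<bar>fdiff u n\<bar> powr p + b n * \<bar>u n\<bar> powr p \<le> energy a b p u"
  unfolding energy_def
proof (rule le_infsum_term)
  show "(\<lambda>n. a n * \<bar>fdiff u n\<bar> powr p + b n * \<bar>u n\<bar> powr p) summable_on UNIV"
    using assms(1) by (simp add: spaceE_def)
qed (simp_all add: assms(2,3))

lemma spaceE_bounded:
  assumes "u \<in> spaceE a b p" and "p > 0" and "\<And>n. a n \<ge> 0"
    and "b0 > 0" and "\<And>n. b n \<ge> b0"
  shows "\<bar>u n\<bar> \<le> (energy a b p u / b0) powr (1 / p)"
proof -
  have "b0 * \<bar>u n\<bar> powr p \<le> b n * \<bar>u n\<bar> powr p"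
    using assms(5) by (simp add: mult_right_mono)
  also have "\<dots> \<le> a n * \<bar>fdiff u n\<bar> powr p + b n * \<bar>u n\<bar> powr p"
    using assms(3) by simp
  also have "\<dots> \<le> energy a b p u"
    using assms(1,3) by (rule energy_ge_term) (meson assms(4,5) less_imp_le order.trans)
  finally have "\<bar>u n\<bar> powr p \<le> energy a b p u / b0"
    using assms(4) by (simp add: field_simps)
  then have "(\<bar>u n\<bar> powr p) powr (1 / p) \<le> (energy a b p u / b0) powr (1 / p)"
    using assms(2) by (simp add: powr_mono2)
  then show ?thesis
    using assms(2) by (simp add: powr_powr)
qed

lemma energy_pos:
  assumes "u \<in> spaceE a b p" and "\<And>n. a n \<ge> 0" and "\<And>n. b n > 0" and "u \<noteq> (\<lambda>_. 0)"
  shows "energy a b p u > 0"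
proof -
  obtain n where "u n \<noteq> 0"
    using assms(4) by auto
  then have "0 < b n * \<bar>u n\<bar> powr p"
    using assms(3) by simp
  also have "\<dots> \<le> a n * \<bar>fdiff u n\<bar> powr p + b n * \<bar>u n\<bar> powr p"
    using assms(2) by simp
  also have "\<dots> \<le> energy a b p u"
    using assms(1,2) by (rule energy_ge_term) (simp add: assms(3) less_imp_le)
  finally show ?thesis .
qed

lemma weighted_powr_sum_pos:
  assumes "(\<lambda>n. c n * \<bar>u n\<bar> powr q) summable_on UNIV" and "\<And>n. c n > 0"
    and "u \<noteq> (\<lambda>_. 0)"
  shows "weighted_powr_sum c q u > 0"
proof -
  obtain n where "u n \<noteq> 0"
    using assms(3) by auto
  then have "0 < c n * \<bar>u n\<bar> powr q"
    using assms(2) by simp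
  also have "\<dots> \<le> weighted_powr_sum c q u"
    unfolding weighted_powr_sum_def using assms(1,2) by (intro le_infsum_term) (simp_all add: less_imp_le)
  finally show ?thesis .
qed

theorem lemma2p6:
  fixes p q r :: real and a b c :: "int \<Rightarrow> real" and u :: "int \<Rightarrow> real"
  assumes "1 < p" and "p < q" and "\<exists>k::nat. k > 0 \<and> p / 2 = real k" and "r \<ge> 1"
    and "\<And>n. a n > 0" and "\<And>n. b n > 0" and "\<And>n. c n > 0"
    and C1: "\<exists>b0>0. \<forall>n. b n \<ge> b0"
    and C1': "\<forall>M. \<exists>N. \<forall>n. \<bar>n\<bar> \<ge> N \<longrightarrow> b n \<ge> M"
    and C2: "\<exists>c0>0. \<forall>n. c n \<le> c0"
    and C2': "c summable_on UNIV"
    and "u \<in> spaceD a b c p q r" and "u \<noteq> (\<lambda>_. 0)"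
  shows "\<exists>!t0. t0 > 0 \<and> (\<lambda>n. t0 * u n) \<in> nehari a b c p q r"
proof -
  have a_nonneg: "a n \<ge> 0" for n
    using assms(5)[of n] by simp
  have uE: "u \<in> spaceE a b p"
    using assms(12) by (simp add: spaceD_def)
  obtain b0 where "b0 > 0" "\<And>n. b n \<ge> b0"
    using C1 by auto
  then have bounded: "\<bar>u n\<bar> \<le> (energy a b p u / b0) powr (1 / p)" for n
    using spaceE_bounded[OF uE _ a_nonneg] assms(1) by simp
  have summable: "(\<lambda>n. c n * \<bar>u n\<bar> powr q) summable_on UNIV"
    by (rule summable_on_weighted_powr[OF C2' less_imp_le[OF assms(7)] bounded]) (use assms(1,2) in simp)
  have "\<exists>!t. t > 0 \<and> energy a b p u * t powr (p - q)
      = r * weighted_powr_sum c q u * ln t + weighted_log_sum c q r u"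
    using ex1_pos_powr_eq_ln energy_pos[OF uE a_nonneg assms(6,13)]
      weighted_powr_sum_pos[OF summable assms(7,13)] assms(2,4) by simp
  moreover have "(\<lambda>n. t * u n) \<in> nehari a b c p q r \<longleftrightarrow>
      energy a b p u * t powr (p - q) = r * weighted_powr_sum c q u * ln t + weighted_log_sum c q r u"
    if "t > 0" for t
    using scale_mem_nehari_iff[OF that assms(12,13) summable] .
  ultimately show ?thesis
    unfolding Ex1_def by blast
qed

end
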